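(* Let $w>1$ be a fixed-precision binary number represented by $n$ bits, of which the first $m$ correspond to its integer part, and let $b\geq n$. Consider the following algorithm (INV): if $w=1$ return $1$; otherwise set $\hat{x}_0 = 2^{-p}$, where $p\in\mathbb{N}$ is such that $2^p > w \geq 2^{p-1}$, set $s=\lceil \log_2 b\rceil$, and for $i=1,\dots,s$ compute exactly (in fixed precision arithmetic) $x_i = -w\hat{x}_{i-1}^2 + 2\hat{x}_{i-1}$ (Newton's iteration for $1/w$) and let $\hat{x}_i$ be $x_i$ truncated to $b$ bits after the decimal point; return $\hat{x}_s$. Then the returned value $\hat{x}_s$ approximates $\frac{1}{w}$ with error \begin{equation*} \left|\hat{x}_s - \frac{1}{w}\right| \leq \frac{2+ \log_2 b}{2^b}. \end{equation*}
   Context: Numbers are held in fixed precision: an $n$-bit register holding $w=\sum_{j=m-n}^{m-1} w^{(j)}2^j$, with $m$ bits for the integer part and $n-m$ bits for the fractional part. The result of each Newton step is computed exactly using addition and multiplication and then truncated to $b$ bits after the decimal point before being passed to the next step. The corollary follows from a prior result (Theorem B.1 of an earlier paper by the authors) stating that $s$ steps of this truncated iteration give $|\hat{x}_s - \frac{1}{w}| \leq (1/2)^{2^s} + s2^{-b}$. *)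

theory Defs
  imports Complex_Main
begin

definition fixed_repr :: "nat \<Rightarrow> nat \<Rightarrow> real \<Rightarrow> bool" where
  "fixed_repr n m w \<longleftrightarrow> m \<le> n \<and>
     (\<exists>d :: int \<Rightarrow> nat. (\<forall>j. d j \<in> {0, 1}) \<and>
        w = (\<Sum>j\<in>{int m - int n .. int m - 1}. real (d j) * 2 powi j))"

text \<open>Truncation to b bits after the binary point (values are nonnegative here,
  truncation = rounding down).\<close>
definition trunc_bits :: "nat \<Rightarrow> real \<Rightarrow> real" where
  "trunc_bits b x = real_of_int \<lfloor>x * 2 ^ b\<rfloor> / 2 ^ b"

fun newton_hat :: "real \<Rightarrow> nat \<Rightarrow> real \<Rightarrow> nat \<Rightarrow> real" where
  "newton_hat w b x0 0 = x0"
| "newton_hat w b x0 (Suc i) =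
     trunc_bits b (- w * (newton_hat w b x0 i)\<^sup>2 + 2 * newton_hat w b x0 i)"

definition inv_exp :: "real \<Rightarrow> nat" where
  "inv_exp w = (LEAST p :: nat. 2 ^ p > w \<and> w \<ge> 2 powi (int p - 1))"

definition INV :: "real \<Rightarrow> nat \<Rightarrow> real" where
  "INV w b = (if w = 1 then 1
     else newton_hat w b (2 powi (- int (inv_exp w))) (nat \<lceil>log 2 (real b)\<rceil>))"

end

theory Submission
  imports Defs
begin

text \<open>Exact Newton iteration squares the residual, \<open>1 - w N(y) = (1 - w y)^2\<close>, and
  truncation to \<open>b\<close> bits loses less than \<open>1/2^b\<close>, so the residuals \<open>e i = 1 - w x i\<close>
  of the truncated iterates satisfy \<open>e (i+1) \<le> e i ^ 2 + w/2^b\<close>. The iterates stay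
  below \<open>1/w\<close> and, once on the \<open>2^-b\<close> grid, never decrease; this caps all later
  residuals by \<open>e 1 \<le> 1/4 + w/2^b\<close> and turns the recurrence into
  \<open>e i \<le> (1/2)^(2^i) + i w/2^b\<close>. The initial guess \<open>2^-p\<close> has \<open>e 0 \<le> 1/2\<close>; dividing by
  \<open>w\<close> and taking \<open>s = \<lceil>log 2 b\<rceil>\<close> gives an error of at most \<open>(1 + s)/2^b\<close>.\<close>

lemma quadratic_recurrence_bound:
  fixes e :: "nat \<Rightarrow> real" and D :: real
  assumes "D \<ge> 0" and "e 0 \<le> 1/2" and nonneg: "\<And>i. e i \<ge> 0"
    and rec: "\<And>i. e (Suc i) \<le> (e i)\<^sup>2 + D"
    and dec: "\<And>i. i \<ge> 1 \<Longrightarrow> e (Suc i) \<le> e i"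
  shows "e i \<le> (1/2) ^ (2 ^ i) + real i * D"
proof (induction i)
  case 0
  then show ?case using assms(2) by simp
next
  case (Suc i)
  have e1: "e 1 \<le> 1/4 + D"
  proof -
    have "(e 0)\<^sup>2 \<le> (1/2)\<^sup>2"
      using nonneg[of 0] assms(2) by (intro power_mono) auto
    then show ?thesis using rec[of 0] by (simp add: power2_eq_square)
  qed
  show ?case
  proof (cases "i = 0")
    case True
    then show ?thesis using e1 by (simp add: power2_eq_square)
  next
    case False
    define t :: real where "t = (1/2) ^ (2 ^ i)"
    have t_le: "t \<le> 1/4"
    proof -
      have "2 ^ 1 \<le> (2::nat) ^ i"
        using False by (intro power_increasing) auto
      then have "(1/2::real) ^ (2 ^ i) \<le> (1/2) ^ 2"
        by (intro power_decreasing) auto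
      then show ?thesis by (simp add: t_def power2_eq_square)
    qed
    have t_sq: "t\<^sup>2 = (1/2) ^ (2 ^ Suc i)"
      unfolding t_def by (simp only: power_Suc power_mult[symmetric] mult.commute)
    have Suc_D: "real (Suc i) * D = real i * D + D"
      by (simp add: distrib_right)
    show ?thesis
    proof (cases "real (Suc i) * D \<ge> 1/2")
      case True
      have "e j \<le> e 1" if "1 \<le> j" for j
        using that
      proof (induction j rule: dec_induct)
        case (step j)
        then show ?case using dec[of j] by linarith
      qed simp
      from this[of "Suc i"] have "e (Suc i) \<le> 1/4 + D" using e1 by simp
      moreover have "1/4 \<le> real i * D"
      proof -
        have "real (Suc i) * D \<le> 2 * real i * D"
          using \<open>i \<noteq> 0\<close> \<open>D \<ge> 0\<close> by (intro mult_right_mono) auto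
        then show ?thesis using True by simp
      qed
      moreover have "(0::real) \<le> (1/2) ^ (2 ^ Suc i)" by simp
      ultimately show ?thesis using Suc_D by linarith
    next
      case False
      define a where "a = real i * D"
      have "a \<ge> 0" "a < 1/2"
        using False \<open>D \<ge> 0\<close> by (auto simp: a_def algebra_simps)
      have "(e i)\<^sup>2 \<le> (t + a)\<^sup>2"
        using nonneg[of i] Suc.IH by (intro power_mono) (auto simp: t_def a_def)
      also have "\<dots> = t\<^sup>2 + a * (2 * t + a)"
        by (simp add: power2_eq_square algebra_simps)
      also have "\<dots> \<le> t\<^sup>2 + a"
        using \<open>a \<ge> 0\<close> \<open>a < 1/2\<close> t_le by (simp add: mult_left_le)
      finally show ?thesis
        using rec[of i] t_sq Suc_D by (simp add: a_def)
    qed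
  qed
qed

lemma trunc_bits_le: "trunc_bits b x \<le> x"
  unfolding trunc_bits_def by (simp add: divide_le_eq)

lemma trunc_bits_gt: "x - 1 / 2 ^ b < trunc_bits b x"
proof -
  have "x * 2 ^ b - 1 < real_of_int \<lfloor>x * 2 ^ b\<rfloor>" by linarith
  then have "(x * 2 ^ b - 1) / 2 ^ b < real_of_int \<lfloor>x * 2 ^ b\<rfloor> / 2 ^ b"
    by (simp add: divide_strict_right_mono)
  then show ?thesis unfolding trunc_bits_def by (simp add: diff_divide_distrib)
qed

lemma trunc_bits_nonneg: "0 \<le> x \<Longrightarrow> 0 \<le> trunc_bits b x"
  unfolding trunc_bits_def by simp

lemma trunc_bits_mono: "x \<le> y \<Longrightarrow> trunc_bits b x \<le> trunc_bits b y"
  unfolding trunc_bits_def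
  by (intro divide_right_mono) (auto intro: floor_mono mult_right_mono)

lemma trunc_bits_idem: "trunc_bits b (trunc_bits b x) = trunc_bits b x"
  unfolding trunc_bits_def by simp

definition newton_step :: "real \<Rightarrow> real \<Rightarrow> real" where
  "newton_step w y = - w * y\<^sup>2 + 2 * y"

lemma newton_hat_Suc_step:
  "newton_hat w b x0 (Suc i) = trunc_bits b (newton_step w (newton_hat w b x0 i))"
  by (simp add: newton_step_def)

lemma newton_step_residual: "1 - w * newton_step w y = (1 - w * y)\<^sup>2"
  by (simp add: newton_step_def power2_eq_square algebra_simps)

lemma newton_step_ge:
  assumes "0 \<le> y" "w * y \<le> 1"
  shows "y \<le> newton_step w y"
proof -
  have "newton_step w y = y + y * (1 - w * y)"
    by (simp add: newton_step_def power2_eq_square algebra_simps)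
  then show ?thesis using assms by simp
qed

context
  fixes w x0 :: real and b :: nat
  assumes w_pos: "w > 0" and x0_nonneg: "0 \<le> x0" and x0_le: "w * x0 \<le> 1"
begin

lemma newton_hat_nonneg_le_inverse:
  "0 \<le> newton_hat w b x0 i \<and> w * newton_hat w b x0 i \<le> 1"
proof (induction i)
  case 0
  then show ?case using x0_nonneg x0_le by simp
next
  case (Suc i)
  let ?y = "newton_hat w b x0 i"
  have "0 \<le> newton_step w ?y"
    using Suc newton_step_ge order_trans by blast
  moreover have "w * trunc_bits b (newton_step w ?y) \<le> w * newton_step w ?y"
    using w_pos trunc_bits_le by simp
  moreover have "w * newton_step w ?y \<le> 1"
    using newton_step_residual[of w ?y] zero_le_power2[of "1 - w * ?y"] by linarith
  ultimately show ?case
    unfolding newton_hat_Suc_step using trunc_bits_nonneg by (meson order_trans)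
qed

lemma newton_hat_residual_Suc:
  "1 - w * newton_hat w b x0 (Suc i) \<le> (1 - w * newton_hat w b x0 i)\<^sup>2 + w / 2 ^ b"
proof -
  let ?z = "newton_step w (newton_hat w b x0 i)"
  have "w * (?z - 1 / 2 ^ b) \<le> w * trunc_bits b ?z"
    using trunc_bits_gt[of ?z b] w_pos by simp
  then show ?thesis
    unfolding newton_hat_Suc_step using newton_step_residual[of w "newton_hat w b x0 i"]
    by (simp add: right_diff_distrib)
qed

lemma newton_hat_mono:
  assumes "i \<ge> 1"
  shows "newton_hat w b x0 i \<le> newton_hat w b x0 (Suc i)"
proof -
  let ?y = "newton_hat w b x0 i"
  obtain j where "i = Suc j" using assms by (cases i) auto
  then have on_grid: "trunc_bits b ?y = ?y"
    by (simp add: newton_hat_Suc_step trunc_bits_idem)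
  have "?y \<le> newton_step w ?y"
    using newton_hat_nonneg_le_inverse newton_step_ge by blast
  then have "trunc_bits b ?y \<le> newton_hat w b x0 (Suc i)"
    unfolding newton_hat_Suc_step by (rule trunc_bits_mono)
  then show ?thesis using on_grid by simp
qed

lemma newton_hat_residual_bound:
  assumes "1 - w * x0 \<le> 1/2"
  shows "1 - w * newton_hat w b x0 s \<le> (1/2) ^ (2 ^ s) + real s * (w / 2 ^ b)"
proof (rule quadratic_recurrence_bound[where e = "\<lambda>i. 1 - w * newton_hat w b x0 i"])
  fix i :: nat
  assume "i \<ge> 1"
  then show "1 - w * newton_hat w b x0 (Suc i) \<le> 1 - w * newton_hat w b x0 i"
    using newton_hat_mono w_pos by simp
qed (use assms w_pos newton_hat_nonneg_le_inverse newton_hat_residual_Suc in auto)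

end

lemma inv_exp_bounds:
  assumes "w > (1::real)"
  shows "w < 2 ^ inv_exp w" and "2 powi (int (inv_exp w) - 1) \<le> w"
proof -
  obtain k :: nat where k: "w < 2 ^ k" using real_arch_pow[of 2 w] by auto
  define p where "p = (LEAST p :: nat. w < 2 ^ p)"
  have "w < 2 ^ p" unfolding p_def using k by (rule LeastI)
  moreover have "p \<noteq> 0" using \<open>w < 2 ^ p\<close> assms by (cases p) auto
  moreover have "\<not> w < 2 ^ (p - 1)"
    using not_less_Least[of "p - 1" "\<lambda>q. w < 2 ^ q"] \<open>p \<noteq> 0\<close> unfolding p_def by auto
  moreover have "(2::real) ^ (p - 1) = 2 powi (int p - 1)"
    using \<open>p \<noteq> 0\<close> by (simp add: power_int_diff power_diff)
  ultimately have "\<exists>p::nat. 2 ^ p > w \<and> w \<ge> 2 powi (int p - 1)"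
    by (intro exI[of _ p]) auto
  then have "2 ^ inv_exp w > w \<and> w \<ge> 2 powi (int (inv_exp w) - 1)"
    unfolding inv_exp_def by (rule LeastI_ex)
  then show "w < 2 ^ inv_exp w" and "2 powi (int (inv_exp w) - 1) \<le> w" by auto
qed

lemma inv_initial_guess:
  assumes "w > (1::real)"
  defines "x0 \<equiv> 2 powi (- int (inv_exp w))"
  shows "0 \<le> x0" and "w * x0 \<le> 1" and "1 - w * x0 \<le> 1/2"
proof -
  have "inv_exp w \<noteq> 0" using inv_exp_bounds(1)[OF assms(1)] assms(1) by (cases "inv_exp w") auto
  then have half: "(2::real) powi (int (inv_exp w) - 1) = 2 ^ inv_exp w / 2"
    by (simp add: power_int_diff)
  have x0: "x0 = 1 / 2 ^ inv_exp w" by (simp add: x0_def power_int_minus divide_inverse)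
  show "0 \<le> x0" by (simp add: x0)
  show "w * x0 \<le> 1" using inv_exp_bounds(1)[OF assms(1)] by (simp add: x0 field_simps)
  show "1 - w * x0 \<le> 1/2" using inv_exp_bounds(2)[OF assms(1)] half by (simp add: x0 field_simps)
qed

lemma nat_ceiling_log2_le: "real (nat \<lceil>log 2 (real b)\<rceil>) \<le> 1 + log 2 (real b)"
proof -
  have "log 2 (real b) \<ge> 0" by (cases "b = 0") (auto simp: log_def)
  then show ?thesis by linarith
qed

lemma le_two_pow_nat_ceiling_log2: "b \<le> 2 ^ nat \<lceil>log 2 (real b)\<rceil>"
proof (cases "b = 0")
  case False
  have "real b = 2 powr log 2 (real b)" using False by simp
  also have "\<dots> \<le> 2 powr real (nat \<lceil>log 2 (real b)\<rceil>)" by (intro powr_mono) linarith+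
  finally show ?thesis by (simp add: powr_realpow flip: of_nat_le_iff)
qed simp

lemma abs_diff_inverse_eq_residual:
  fixes w x :: real
  assumes "w > 0" "w * x \<le> 1"
  shows "\<bar>x - 1 / w\<bar> = (1 - w * x) / w"
proof -
  have "x - 1 / w = - ((1 - w * x) / w)" using assms by (simp add: field_simps)
  then show ?thesis using assms by simp
qed

theorem corollary1:
  fixes w :: real and n m b :: nat
  assumes "fixed_repr n m w"
    and "w > 1"
    and "b \<ge> n"
  shows "\<bar>INV w b - 1 / w\<bar> \<le> (2 + log 2 (real b)) / 2 ^ b"
proof -
  define s where "s = nat \<lceil>log 2 (real b)\<rceil>"
  define x0 where "x0 = (2::real) powi (- int (inv_exp w))"
  define y where "y = newton_hat w b x0 s"
  have "w > 0" using \<open>w > 1\<close> by simp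
  note guess = inv_initial_guess[OF \<open>w > 1\<close>, folded x0_def]
  have "INV w b = y" using \<open>w > 1\<close> by (simp add: INV_def y_def s_def x0_def)
  then have "\<bar>INV w b - 1 / w\<bar> = (1 - w * y) / w"
    using newton_hat_nonneg_le_inverse[OF \<open>w > 0\<close> guess(1,2)] \<open>w > 0\<close>
    by (simp add: y_def abs_diff_inverse_eq_residual)
  also have "\<dots> \<le> ((1/2) ^ (2 ^ s) + real s * (w / 2 ^ b)) / w"
    using newton_hat_residual_bound[OF \<open>w > 0\<close> guess] \<open>w > 0\<close>
    by (simp add: y_def divide_right_mono)
  also have "\<dots> \<le> (1/2) ^ (2 ^ s) + real s / 2 ^ b"
    using \<open>w > 1\<close> by (simp add: add_divide_distrib divide_le_eq mult_le_cancel_left1)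
  also have "\<dots> \<le> (1/2) ^ b + real s / 2 ^ b"
    using le_two_pow_nat_ceiling_log2[of b] by (simp add: s_def power_decreasing)
  also have "\<dots> = (1 + real s) / 2 ^ b"
    by (simp add: power_one_over add_divide_distrib)
  also have "\<dots> \<le> (2 + log 2 (real b)) / 2 ^ b"
    using nat_ceiling_log2_le[of b] by (intro divide_right_mono) (auto simp: s_def)
  finally show ?thesis .
qed

end
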